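(* Let $0\le r\le n$, let $A\in\mathcal{A}_{n+1,r+1}$ have block-ends $b_1>\dots>b_{r+1}$, and fix a tiling of $\Gamma(X(A))$. If $x=b_i$ with $i<r+1$, then at the termination of the fusion-exchange algorithm applied to $A$, the northwest boundary edge of the $x$-strip carries a nonempty label.
   Context: Words and diagrams. For $0\le r\le n$ let $B_n^r$ be the set of words $X\in\{H,L,0\}^n$ with exactly $r$ letters $L$. If $X$ has $k$ letters $H$, $r$ letters $L$ and $\ell$ letters $0$, its rhombic diagram $\Gamma(X)$ is the closed region bounded by two paths of unit steps, using the directions west (horizontal), south (vertical) and southwest (diagonal: a fixed unit vector strictly between west and south), both going from a point $P$ to a point $Q$: the northwest boundary consists of $\ell$ west steps, then $r$ southwest steps, then $k$ south steps; the southeast boundary is obtained by reading $X$ left to right and taking a west step for each $0$, a southwest step for each $L$, a south step for each $H$. A tiling of $\Gamma(X)$ is a tiling by unit rhombi of three kinds: squares (horizontal and vertical edges), tall rhombi (vertical and diagonal edges), short rhombi (horizontal and diagonal edges). A west-strip (resp. north-strip, northwest-strip) is a maximal set of tiles connected through shared vertical (resp. horizontal, diagonal) edges; each runs from an edge of the southeast boundary to an edge of the northwest boundary. Each tile has two edges on its lower-right side: its east edge (vertical for squares and tall rhombi, diagonal for short rhombi) and its south edge (horizontal for squares and short rhombi, diagonal for tall rhombi); the parallel edges on its upper-left side are its west and north edges. Assemblées. An assemblée of size $(m,s)$ is a collection of $s$ nonempty, pairwise disjoint, linearly ordered sets (blocks) with union $\{1,\dots,m\}$; the last element of a block is its block-end.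 Blocks are listed in the canonical order with decreasing block-ends, and the assemblée is identified with the concatenated word. $\mathcal{A}_{m,s}$ is the set of these. For $A\in\mathcal{A}_{n+1,r+1}$ with block-ends $b_1>\dots>b_{r+1}$, a non-block-end element $x$ is an increase if $x+1$ appears to the right of $x$ in $A$, and a decrease otherwise (so $n+1$, if not a block-end, is a decrease). $X(A)\in B_n^r$ is obtained from $A$ by deleting its last letter $b_{r+1}$ and replacing each increase by $H$, each decrease by $0$ and each remaining block-end by $L$. Fusion-exchange algorithm. A label is a finite, possibly empty, set of consecutive integers; for labels $E,S$ write $E\succ S$ if both are nonempty and $\min E=\max S+1$. Given $A\in\mathcal{A}_{n+1,r+1}$ and a tiling of $\Gamma(X(A))$: initially the southeast boundary edges, in order from $P$ to $Q$, receive the singleton labels of the letters of $A$ from left to right, $b_{r+1}$ omitted. Step: choose a tile whose east and south edges are labeled, say by $E$ and $S$, and whose west and north edges are not. (R I) If $E\succ S$ and the south edge is horizontal: west edge gets $E\cup S$, north edge gets $\emptyset$, place $\alpha$ in the tile. (R II) If $S\succ E$ and the east edge is vertical: north edge gets $E\cup S$, west edge gets $\emptyset$, place $\beta$. (R III) Otherwise: west edge gets $E$, north edge gets $S$, and place $q$ if $E\ne\emptyset$ and $S\ne\emptyset$. Repeat until every edge is labeled (termination). For a letter $x\neq b_{r+1}$ of $A$, the $x$-strip is the strip containing the southeast boundary edge initially labeled $\{x\}$. *)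

theory Defs
  imports Main
begin

text \<open>Letters H, L, 0 (the latter written Z). A step direction: Z = west,
  L = southwest, H = south.\<close>
datatype letter = H | L | Z

fun rank :: "letter \<Rightarrow> nat" where
  "rank Z = 0" | "rank L = 1" | "rank H = 2"

text \<open>An assemblee of size (m,s) is given by its list of blocks (each block a
  nonempty list, i.e. a linearly ordered set), listed in canonical order
  (strictly decreasing block-ends); its word is the concatenation.\<close>
definition assemblee :: "nat \<Rightarrow> nat \<Rightarrow> nat list list \<Rightarrow> bool" where
  "assemblee m s A \<longleftrightarrow> length A = s \<and> (\<forall>B\<in>set A. B \<noteq> []) \<and>
     distinct (concat A) \<and> set (concat A) = {1..m} \<and> sorted_wrt (>) (map last A)"

definition block_ends :: "nat list list \<Rightarrow> nat list" where
  "block_ends A = map last A"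

definition is_increase :: "nat list list \<Rightarrow> nat \<Rightarrow> bool" where
  "is_increase A x \<longleftrightarrow> (\<exists>i j. i < j \<and> j < length (concat A) \<and>
      concat A ! i = x \<and> concat A ! j = x + 1)"

definition letter_of :: "nat list list \<Rightarrow> nat \<Rightarrow> letter" where
  "letter_of A x = (if x \<in> set (block_ends A) then L
                    else if is_increase A x then H else Z)"

definition trunc_word :: "nat list list \<Rightarrow> nat list" where
  "trunc_word A = butlast (concat A)"

definition X_of :: "nat list list \<Rightarrow> letter list" where
  "X_of A = map (letter_of A) (trunc_word A)"

type_synonym label = "nat set"

definition succ_lab :: "label \<Rightarrow> label \<Rightarrow> bool" (infix "\<succ>\<^sub>l" 50) where
  "E \<succ>\<^sub>l S \<longleftrightarrow> E \<noteq> {} \<and> S \<noteq> {} \<and> Min E = Max S + 1"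

text \<open>A frontier path from P to Q is a list of edges; each edge records its
  direction (letter), its label, and the identity of its strip (the letter x of A
  whose initial southeast boundary edge lies in that strip).
  A tile whose lower-right side consists of the consecutive frontier edges j, j+1
  has east edge j and south edge j+1 (path order P to Q), which happens exactly
  when rank of edge j exceeds rank of edge j+1 (square: H,Z; tall rhombus: H,L;
  short rhombus: L,Z). Processing it replaces these two edges by the north edge
  (position j, parallel to the south edge) and the west edge (position j+1,
  parallel to the east edge).\<close>
type_synonym edge = "letter \<times> label \<times> nat"
type_synonym frontier = "edge list"

definition can_flip :: "nat \<Rightarrow> frontier \<Rightarrow> bool" where
  "can_flip j st \<longleftrightarrow> Suc j < length st \<and> rank (fst (st ! Suc j)) < rank (fst (st ! j))"

definition tile_out :: "letter \<Rightarrow> label \<Rightarrow> letter \<Rightarrow> label \<Rightarrow> label \<times> label" where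
  \<comment> \<open>arguments: east letter, E, south letter, S; result: (north label, west label)\<close>
  "tile_out a E b S =
     (if E \<succ>\<^sub>l S \<and> b = Z then ({}, E \<union> S)
      else if S \<succ>\<^sub>l E \<and> a = H then (E \<union> S, {})
      else (S, E))"

definition flip :: "nat \<Rightarrow> frontier \<Rightarrow> frontier" where
  "flip j st =
     (let (a, E, s) = st ! j; (b, S, t) = st ! Suc j;
          (N, W) = tile_out a E b S
      in st[j := (b, N, t), Suc j := (a, W, s)])"

fun valid_run :: "frontier \<Rightarrow> nat list \<Rightarrow> bool" where
  "valid_run st [] = True"
| "valid_run st (j # js) = (can_flip j st \<and> valid_run (flip j st) js)"

fun run :: "frontier \<Rightarrow> nat list \<Rightarrow> frontier" where
  "run st [] = st"
| "run st (j # js) = run (flip j st) js"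

text \<open>Termination: the frontier is the northwest boundary 0^l L^r H^k.\<close>
definition terminated :: "frontier \<Rightarrow> bool" where
  "terminated st \<longleftrightarrow> sorted (map (rank \<circ> fst) st)"

text \<open>Initial frontier: the southeast boundary, edge j carrying the letter of X(A)
  and the singleton label of the j-th letter of A (b_{r+1} omitted).\<close>
definition init_frontier :: "nat list list \<Rightarrow> frontier" where
  "init_frontier A = map (\<lambda>y. (letter_of A y, {y}, y)) (trunc_word A)"

end

theory Submission
  imports Defs
begin

text \<open>Rule (R I) empties only a horizontal edge and rule (R II) only a vertical one;
  every other output label contains an input label. Since the initial labels are
  singletons, diagonal edges therefore carry nonempty labels at every stage. A tile
  only exchanges the directions and strips of its two lower-right edges, and the
  strip of a block-end b_i with i < r+1 starts at a diagonal southeast boundary edge,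
  so that strip keeps a diagonal edge on every frontier.\<close>

lemma tile_out_north_nonempty: "S \<noteq> {} \<Longrightarrow> fst (tile_out a E L S) \<noteq> {}"
  by (simp add: tile_out_def)

lemma tile_out_west_nonempty: "E \<noteq> {} \<Longrightarrow> snd (tile_out L E b S) \<noteq> {}"
  by (simp add: tile_out_def)

definition dir_strip :: "edge \<Rightarrow> letter \<times> nat" where
  "dir_strip e = (fst e, snd (snd e))"

definition diagonal_labels_nonempty :: "frontier \<Rightarrow> bool" where
  "diagonal_labels_nonempty st \<longleftrightarrow> (\<forall>e\<in>set st. fst e = L \<longrightarrow> fst (snd e) \<noteq> {})"

lemma flip_split:
  assumes "st ! j = (a, E, s)" "st ! Suc j = (b, S, t)"
  shows "flip j st = st[j := (b, fst (tile_out a E b S), t), Suc j := (a, snd (tile_out a E b S), s)]"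
  using assms by (simp add: flip_def split: prod.split)

lemma set_dir_strip_flip:
  assumes "can_flip j st"
  shows "dir_strip ` set (flip j st) = dir_strip ` set st"
proof -
  obtain a E s b S t where edges: "st ! j = (a, E, s)" "st ! Suc j = (b, S, t)"
    by (metis prod.exhaust)
  have "Suc j < length st"
    using assms by (simp add: can_flip_def)
  then have "map dir_strip (flip j st)
      = (map dir_strip st)[j := map dir_strip st ! Suc j, Suc j := map dir_strip st ! j]"
    by (simp add: flip_split[OF edges] edges map_update dir_strip_def)
  also have "set \<dots> = set (map dir_strip st)"
    using \<open>Suc j < length st\<close> by (intro set_swap) simp_all
  finally show ?thesis
    by simp
qed

lemma diagonal_labels_nonempty_flip:
  assumes "diagonal_labels_nonempty st" "can_flip j st"
  shows "diagonal_labels_nonempty (flip j st)"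
  unfolding diagonal_labels_nonempty_def
proof (intro ballI impI)
  obtain a E s b S t where edges: "st ! j = (a, E, s)" "st ! Suc j = (b, S, t)"
    by (metis prod.exhaust)
  have "Suc j < length st"
    using assms(2) by (simp add: can_flip_def)
  then have "(a, E, s) \<in> set st" "(b, S, t) \<in> set st"
    using edges by (metis nth_mem Suc_lessD)+
  with assms(1) have "a = L \<Longrightarrow> E \<noteq> {}" "b = L \<Longrightarrow> S \<noteq> {}"
    by (auto simp: diagonal_labels_nonempty_def)
  then have north: "b = L \<Longrightarrow> fst (tile_out a E b S) \<noteq> {}"
      and west: "a = L \<Longrightarrow> snd (tile_out a E b S) \<noteq> {}"
    using tile_out_north_nonempty tile_out_west_nonempty by blast+
  fix e
  assume "e \<in> set (flip j st)" and diagonal: "fst e = L"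
  then consider "e = (b, fst (tile_out a E b S), t)" | "e = (a, snd (tile_out a E b S), s)"
    | "e \<in> set st"
    unfolding flip_split[OF edges] by (blast dest: set_update_subset_insert[THEN subsetD])
  then show "fst (snd e) \<noteq> {}"
  proof cases
    case 1
    then show ?thesis
      using north diagonal by simp
  next
    case 2
    then show ?thesis
      using west diagonal by simp
  next
    case 3
    then show ?thesis
      using assms(1) diagonal unfolding diagonal_labels_nonempty_def by blast
  qed
qed

lemma set_dir_strip_run:
  "valid_run st js \<Longrightarrow> dir_strip ` set (run st js) = dir_strip ` set st"
  by (induction st js rule: run.induct) (simp_all add: set_dir_strip_flip)

lemma diagonal_labels_nonempty_run:
  "valid_run st js \<Longrightarrow> diagonal_labels_nonempty st \<Longrightarrow> diagonal_labels_nonempty (run st js)"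
  by (induction st js rule: run.induct) (simp_all add: diagonal_labels_nonempty_flip)

lemma block_end_in_trunc_word:
  assumes "\<forall>B\<in>set A. B \<noteq> []" "Suc i < length A"
  shows "block_ends A ! i \<in> set (trunc_word A)"
proof -
  obtain As B where A: "A = As @ [B]"
    using assms(2) by (metis length_0_conv not_less0 rev_exhaust)
  with assms(1) have "trunc_word A = concat As @ butlast B"
    by (simp add: trunc_word_def butlast_append)
  moreover have "A ! i \<in> set As" and "A ! i \<noteq> []"
    using assms A by (simp_all add: nth_append)
  then have "last (A ! i) \<in> set (concat As)"
    using last_in_set by fastforce
  ultimately show ?thesis
    using assms(2) by (simp add: block_ends_def)
qed

theorem lemma3p6:
  fixes n r :: nat and A :: "nat list list" and js :: "nat list" and x :: nat
  assumes "r \<le> n"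
    and "assemblee (Suc n) (Suc r) A"
    and "valid_run (init_frontier A) js"
    and "terminated (run (init_frontier A) js)"
    and "i < r" and "x = block_ends A ! i"
  shows "\<exists>e \<in> set (run (init_frontier A) js). snd (snd e) = x \<and> fst (snd e) \<noteq> {}"
proof -
  have "x \<in> set (trunc_word A)"
    using assms(2,5,6) block_end_in_trunc_word by (auto simp: assemblee_def)
  moreover have "letter_of A x = L"
    using assms(2,5,6) by (simp add: letter_of_def block_ends_def assemblee_def)
  ultimately have "(L, x) \<in> dir_strip ` set (init_frontier A)"
    by (force simp: init_frontier_def dir_strip_def)
  moreover have "diagonal_labels_nonempty (init_frontier A)"
    by (auto simp: diagonal_labels_nonempty_def init_frontier_def)
  ultimately have "(L, x) \<in> dir_strip ` set (run (init_frontier A) js)"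
      and "diagonal_labels_nonempty (run (init_frontier A) js)"
    using set_dir_strip_run diagonal_labels_nonempty_run assms(3) by auto
  then show ?thesis
    by (force simp: dir_strip_def diagonal_labels_nonempty_def)
qed

end
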